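(* In the setting described in the context, let $\rho:\mathbb{R}^n\to[0,\infty)$ be continuous and $\phi:[0,\infty)\to[0,\infty)$ be continuous and nondecreasing, and suppose that (in addition to the bounds on $\alpha$) $\alpha(x)=\phi(\rho(x))$ for all $x\in\mathbb{R}^n$. Assume further that there exists a nondecreasing function $\Gamma:[0,\infty)\to[0,\infty)$ such that $\inf_{u\in U}\rho(f(x,u))=\Gamma(\rho(x))$ for all $x\in\mathbb{R}^n$. Then $\inf_{u\in U}\mathcal{V}(\{f(x,u)\})<\mathcal{V}(\{x\})$ and $\inf_{u\in U}\mathcal{W}(\{f(x,u)\})<\mathcal{W}(\{x\})$ for all $x\in\mathcal{D}_{\mathcal{A}}\setminus\mathcal{A}$.
   Context: Let $\|\cdot\|$ be a norm on $\mathbb{R}^n$ and $\mathrm{dist}(x,\Omega):=\inf_{y\in\Omega}\|x-y\|$. Let $\mathcal{K}(\mathbb{R}^n)$ denote the nonempty compact subsets of $\mathbb{R}^n$. Consider $x_{k+1}=f(x_k,u_k)$ with $f:\mathbb{R}^n\times\mathbb{R}^m\to\mathbb{R}^n$ continuous and inputs $u_k\in U$, $U\subset\mathbb{R}^m$ nonempty compact. For $x\in\mathbb{R}^n$ and $\pi:\mathbb{Z}_+\to U$, $\varphi_x^\pi(0)=x$, $\varphi_x^\pi(k+1)=f(\varphi_x^\pi(k),\pi(k))$; $\mathcal{R}(X,k):=\{\varphi_x^\pi(k):x\in X,\pi\in U^{\mathbb{Z}_+}\}$. Let $\mathcal{A}\in\mathcal{K}(\mathbb{R}^n)$ be controlled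 invariant. Assume local $\ell_p$-stabilizability: there exist $r>0$, $M\ge1$, $p>0$, $\lambda:[0,r]\times\mathbb{Z}_+\to\mathbb{R}_+$ such that (1) for each $k$, $s\mapsto\lambda(s,k)$ is continuous, nondecreasing, $\lambda(0,k)=0$; for each $s$, $k\mapsto\lambda(s,k)$ is nonincreasing, $\lambda(s,0)\le s$; (2) $\sum_{k}\lambda(r,k)^p<\infty$; (3) for every $x$ with $\mathrm{dist}(x,\mathcal{A})\le r$ there is $\pi\in U^{\mathbb{Z}_+}$ with $\mathrm{dist}(\varphi_x^\pi(k),\mathcal{A})\le M\lambda(\mathrm{dist}(x,\mathcal{A}),k)$ for all $k$. Let $\mathcal{D}_{\mathcal{A}}:=\{x:\exists\pi\in U^{\mathbb{Z}_+},\ \lim_{k\to\infty}\mathrm{dist}(\varphi_x^\pi(k),\mathcal{A})=0\}$. Let $\alpha:\mathbb{R}^n\to\mathbb{R}_+$ be continuous with $\underline{\alpha}\,\mathrm{dist}(x,\mathcal{A})^{\bar p}\le\alpha(x)\le\overline{\alpha}\,\mathrm{dist}(x,\mathcal{A})^{\bar p}$, constants $\underline{\alpha},\overline{\alpha}>0$, $\bar p\ge p$. Define $\Psi(X):=\inf_{y\in X}\alpha(y)$, $\mathcal{V}(X):=\sum_{k=0}^\infty\Psi(\mathcal{R}(X,k))\in[0,\infty]$, and $\mathcal{W}(X):=1-\exp(-\mathcal{V}(X))$ with the convention $\exp(-\infty)=0$. *)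

theory Defs
  imports "HOL-Analysis.Analysis"
begin

text \<open>An arbitrary norm on a real vector space (the paper's norm on R^n need not be Euclidean).\<close>
definition is_norm :: "('a::real_vector \<Rightarrow> real) \<Rightarrow> bool" where
  "is_norm N \<longleftrightarrow> (\<forall>x. N x = 0 \<longrightarrow> x = 0) \<and> (\<forall>x y. N (x + y) \<le> N x + N y)
      \<and> (\<forall>c x. N (scaleR c x) = \<bar>c\<bar> * N x)"

definition setdist :: "('a::real_vector \<Rightarrow> real) \<Rightarrow> 'a \<Rightarrow> 'a set \<Rightarrow> real" where
  "setdist N x \<Omega> = (INF y\<in>\<Omega>. N (x - y))"

primrec traj :: "('x \<Rightarrow> 'u \<Rightarrow> 'x) \<Rightarrow> 'x \<Rightarrow> (nat \<Rightarrow> 'u) \<Rightarrow> nat \<Rightarrow> 'x" where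
  "traj f x \<pi> 0 = x"
| "traj f x \<pi> (Suc k) = f (traj f x \<pi> k) (\<pi> k)"

definition reach :: "('x \<Rightarrow> 'u \<Rightarrow> 'x) \<Rightarrow> 'u set \<Rightarrow> 'x set \<Rightarrow> nat \<Rightarrow> 'x set" where
  "reach f U X k = {traj f x \<pi> k | x \<pi>. x \<in> X \<and> (\<forall>j. \<pi> j \<in> U)}"

definition controlled_invariant :: "('x \<Rightarrow> 'u \<Rightarrow> 'x) \<Rightarrow> 'u set \<Rightarrow> 'x set \<Rightarrow> bool" where
  "controlled_invariant f U A \<longleftrightarrow> (\<forall>x\<in>A. \<exists>u\<in>U. f x u \<in> A)"

definition domA :: "('a::real_vector \<Rightarrow> real) \<Rightarrow> ('a \<Rightarrow> 'u \<Rightarrow> 'a) \<Rightarrow> 'u set \<Rightarrow> 'a set \<Rightarrow> 'a set" where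
  "domA N f U A = {x. \<exists>\<pi>. (\<forall>j. \<pi> j \<in> U) \<and> (\<lambda>k. setdist N (traj f x \<pi> k) A) \<longlonglongrightarrow> 0}"

definition Psi :: "('x \<Rightarrow> real) \<Rightarrow> 'x set \<Rightarrow> real" where
  "Psi \<alpha> X = (INF y\<in>X. \<alpha> y)"

definition Vfun :: "('x \<Rightarrow> real) \<Rightarrow> ('x \<Rightarrow> 'u \<Rightarrow> 'x) \<Rightarrow> 'u set \<Rightarrow> 'x set \<Rightarrow> ennreal" where
  "Vfun \<alpha> f U X = (\<Sum>k. ennreal (Psi \<alpha> (reach f U X k)))"

definition Wfun :: "('x \<Rightarrow> real) \<Rightarrow> ('x \<Rightarrow> 'u \<Rightarrow> 'x) \<Rightarrow> 'u set \<Rightarrow> 'x set \<Rightarrow> real" where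
  "Wfun \<alpha> f U X = (if Vfun \<alpha> f U X = \<infinity> then 1 else 1 - exp (- enn2real (Vfun \<alpha> f U X)))"

end

theory Submission
  imports Defs
begin

text \<open>The running cost of the reachable sets is \<Psi>(R({y},k)) = \<phi>(\<Gamma>^k(\<rho> y)): minimising \<rho> over
  R({y},k+1) means minimising first over the last control, which turns \<rho> into \<Gamma> \<circ> \<rho>, and then
  over R({y},k), where the monotone \<Gamma> commutes with the minimum. A control u0 minimising
  \<rho>(f(x,u)) satisfies \<rho>(f(x,u0)) = \<Gamma>(\<rho> x), so the cost sequence from f(x,u0) is the one from x
  shifted by a step and V({f(x,u0)}) = V({x}) - \<alpha>(x). For x in D_A outside A this is a strict
  decrease, since \<alpha>(x) > 0 and V({x}) is finite by the local l_p-stabilizability. Strict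
  monotonicity of 1 - exp(-t) transfers the decrease to W.\<close>

lemma is_norm_zero: "is_norm N \<Longrightarrow> N 0 = 0"
  unfolding is_norm_def by (metis abs_zero mult_zero_left scaleR_zero_left)

lemma is_norm_minus: "is_norm N \<Longrightarrow> N (- v) = N v"
  unfolding is_norm_def by (metis abs_minus_cancel abs_one mult_1 scaleR_minus1_left)

lemma is_norm_nonneg:
  assumes "is_norm N"
  shows "N v \<ge> 0"
proof -
  have "N (v + - v) \<le> N v + N (- v)"
    using assms unfolding is_norm_def by blast
  then show ?thesis
    using is_norm_zero[OF assms] is_norm_minus[OF assms] by simp
qed

lemma is_norm_sum_le:
  assumes "is_norm N"
  shows "N (sum g S) \<le> (\<Sum>b\<in>S. N (g b))"
proof (induction S rule: infinite_finite_induct)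
  case (insert a S)
  have "N (g a + sum g S) \<le> N (g a) + N (sum g S)"
    using assms unfolding is_norm_def by blast
  then show ?case
    using insert by simp
qed (simp_all add: is_norm_zero[OF assms])

lemma is_norm_le_norm:
  fixes N :: "'a::euclidean_space \<Rightarrow> real"
  assumes "is_norm N"
  shows "N v \<le> (\<Sum>b\<in>Basis. N b) * norm v"
proof -
  have "N v = N (\<Sum>b\<in>Basis. (v \<bullet> b) *\<^sub>R b)"
    by (simp add: euclidean_representation)
  also have "\<dots> \<le> (\<Sum>b\<in>Basis. N ((v \<bullet> b) *\<^sub>R b))"
    by (rule is_norm_sum_le[OF assms])
  also have "\<dots> = (\<Sum>b\<in>Basis. \<bar>v \<bullet> b\<bar> * N b)"
    using assms by (simp add: is_norm_def)
  also have "\<dots> \<le> (\<Sum>b\<in>Basis. norm v * N b)"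
    by (intro sum_mono mult_right_mono) (simp_all add: Basis_le_norm is_norm_nonneg[OF assms])
  finally show ?thesis
    by (simp add: sum_distrib_left mult.commute)
qed

lemma is_norm_continuous_on:
  fixes N :: "'a::euclidean_space \<Rightarrow> real"
  assumes "is_norm N"
  shows "continuous_on S N"
proof (rule lipschitz_on_continuous_on)
  let ?C = "\<Sum>b\<in>Basis. N b"
  show "?C-lipschitz_on S N"
  proof (rule lipschitz_onI)
    fix x y :: 'a
    have "N x \<le> N y + N (x - y)" "N y \<le> N x + N (y - x)"
      using assms unfolding is_norm_def by (metis add.commute diff_add_cancel)+
    moreover have "N (y - x) = N (x - y)"
      using is_norm_minus[OF assms, of "x - y"] by simp
    moreover have "N (x - y) \<le> ?C * norm (x - y)"
      by (rule is_norm_le_norm[OF assms])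
    ultimately show "dist (N x) (N y) \<le> ?C * dist x y"
      by (simp add: dist_real_def dist_norm abs_le_iff)
  qed (simp add: sum_nonneg is_norm_nonneg[OF assms])
qed

lemma setdist_nonneg: "is_norm N \<Longrightarrow> A \<noteq> {} \<Longrightarrow> setdist N x A \<ge> 0"
  unfolding setdist_def by (auto intro: cINF_greatest simp: is_norm_nonneg)

lemma setdist_pos:
  fixes N :: "'a::euclidean_space \<Rightarrow> real"
  assumes N: "is_norm N" and A: "compact A" "A \<noteq> {}" and "x \<notin> A"
  shows "setdist N x A > 0"
proof -
  have "continuous_on A (\<lambda>y. N (x - y))"
    by (intro continuous_on_compose2[OF is_norm_continuous_on[OF N]] continuous_intros) auto
  then obtain y0 where y0: "y0 \<in> A" "\<And>y. y \<in> A \<Longrightarrow> N (x - y0) \<le> N (x - y)"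
    using continuous_attains_inf[OF A] by blast
  have "N (x - y0) \<le> setdist N x A"
    unfolding setdist_def using A y0 by (auto intro: cINF_greatest)
  moreover have "N (x - y0) \<noteq> 0"
    using N \<open>x \<notin> A\<close> y0(1) unfolding is_norm_def by force
  ultimately show ?thesis
    using is_norm_nonneg[OF N, of "x - y0"] by linarith
qed

lemma INF_mono_comp_eq:
  fixes g :: "'a::topological_space \<Rightarrow> 'b::{conditionally_complete_linorder, linorder_topology}"
    and \<phi> :: "'b \<Rightarrow> 'c::conditionally_complete_lattice"
  assumes "compact S" "S \<noteq> {}" "continuous_on S g" "mono_on (g ` S) \<phi>"
  shows "(INF z\<in>S. \<phi> (g z)) = \<phi> (INF z\<in>S. g z)"
proof -
  obtain z0 where z0: "z0 \<in> S" "\<And>z. z \<in> S \<Longrightarrow> g z0 \<le> g z"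
    using continuous_attains_inf[OF assms(1-3)] by blast
  have "(INF z\<in>S. g z) = g z0"
    using z0 by (intro cInf_eq_minimum) auto
  moreover have "(INF z\<in>S. \<phi> (g z)) = \<phi> (g z0)"
    using z0 mono_onD[OF assms(4)] by (intro cInf_eq_minimum) auto
  ultimately show ?thesis
    by simp
qed

lemma traj_cong: "(\<And>j. j < k \<Longrightarrow> \<pi> j = \<pi>' j) \<Longrightarrow> traj f x \<pi> k = traj f x \<pi>' k"
  by (induction k) auto

lemma traj_append:
  "traj f x (\<lambda>j. if j < K then \<pi> j else \<pi>' (j - K)) (K + k) = traj f (traj f x \<pi> K) \<pi>' k"
  by (induction k) (auto intro: traj_cong)

lemma reach_0: "U \<noteq> {} \<Longrightarrow> reach f U X 0 = X"
  unfolding reach_def by (auto intro!: exI[of _ "\<lambda>_. SOME u. u \<in> U"] some_in_eq[THEN iffD2])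

lemma reach_Suc: "reach f U X (Suc k) = (\<Union>z\<in>reach f U X k. (\<lambda>u. f z u) ` U)"
proof
  show "reach f U X (Suc k) \<subseteq> (\<Union>z\<in>reach f U X k. (\<lambda>u. f z u) ` U)"
    unfolding reach_def by auto
next
  show "(\<Union>z\<in>reach f U X k. (\<lambda>u. f z u) ` U) \<subseteq> reach f U X (Suc k)"
  proof clarify
    fix z u assume "z \<in> reach f U X k" "u \<in> U"
    then obtain x \<pi> where x: "z = traj f x \<pi> k" "x \<in> X" "\<forall>j. \<pi> j \<in> U"
      unfolding reach_def by blast
    have "traj f x (\<pi>(k := u)) k = z"
      using x by (auto intro: traj_cong)
    then have "f z u = traj f x (\<pi>(k := u)) (Suc k)"
      by simp
    moreover have "\<forall>j. (\<pi>(k := u)) j \<in> U"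
      using x \<open>u \<in> U\<close> by simp
    ultimately show "f z u \<in> reach f U X (Suc k)"
      unfolding reach_def using x(2) by blast
  qed
qed

lemma reach_nonempty: "X \<noteq> {} \<Longrightarrow> U \<noteq> {} \<Longrightarrow> reach f U X k \<noteq> {}"
  by (induction k) (simp_all add: reach_0 reach_Suc)

lemma compact_reach:
  assumes f: "continuous_on UNIV (\<lambda>(x, u). f x u)" and U: "compact U" "U \<noteq> {}"
    and "compact X"
  shows "compact (reach f U X k)"
proof (induction k)
  case 0
  then show ?case
    using \<open>compact X\<close> by (simp add: reach_0[OF U(2)])
next
  case (Suc k)
  have "compact ((\<lambda>(z, u). f z u) ` (reach f U X k \<times> U))"
    using Suc U by (intro compact_continuous_image continuous_on_subset[OF f] compact_Times) auto
  moreover have "(\<lambda>(z, u). f z u) ` (reach f U X k \<times> U) = reach f U X (Suc k)"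
    unfolding reach_Suc by auto
  ultimately show ?case
    by simp
qed

locale scalar_reduction =
  fixes f :: "'a::topological_space \<Rightarrow> 'u::topological_space \<Rightarrow> 'a" and U :: "'u set"
    and \<rho> :: "'a \<Rightarrow> real" and \<Gamma> :: "real \<Rightarrow> real"
  assumes f_cont: "continuous_on UNIV (\<lambda>(x, u). f x u)"
    and U_compact: "compact U" and U_ne: "U \<noteq> {}"
    and \<rho>_cont: "continuous_on UNIV \<rho>" and \<rho>_nonneg: "\<And>x. \<rho> x \<ge> 0"
    and \<Gamma>_mono: "mono_on {0..} \<Gamma>"
    and \<Gamma>_eq: "\<And>x. (INF u\<in>U. \<rho> (f x u)) = \<Gamma> (\<rho> x)"
begin

lemma INF_reach_eq_funpow:
  assumes X: "compact X" "X \<noteq> {}"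
  shows "(INF z\<in>reach f U X k. \<rho> z) = (\<Gamma> ^^ k) (INF z\<in>X. \<rho> z)"
proof (induction k)
  case 0
  then show ?case
    by (simp add: reach_0[OF U_ne])
next
  case (Suc k)
  let ?R = "reach f U X k"
  have R: "compact ?R" "?R \<noteq> {}"
    using compact_reach[OF f_cont U_compact U_ne X(1)] reach_nonempty[OF X(2) U_ne] by auto
  have "(INF z\<in>reach f U X (Suc k). \<rho> z) = (INF z\<in>?R. INF w\<in>(\<lambda>u. f z u) ` U. \<rho> w)"
    unfolding reach_Suc using R(2) U_ne \<rho>_nonneg
    by (intro cINF_UNION) (auto intro: bdd_belowI[where m = 0])
  also have "\<dots> = (INF z\<in>?R. \<Gamma> (\<rho> z))"
    by (simp add: image_image \<Gamma>_eq)
  also have "\<dots> = \<Gamma> (INF z\<in>?R. \<rho> z)"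
    using R \<rho>_nonneg
    by (intro INF_mono_comp_eq continuous_on_subset[OF \<rho>_cont] mono_on_subset[OF \<Gamma>_mono]) auto
  finally show ?case
    using Suc.IH by simp
qed

lemma Psi_reach_eq_funpow:
  assumes \<phi>: "mono_on {0..} \<phi>" and X: "compact X" "X \<noteq> {}"
  shows "Psi (\<lambda>x. \<phi> (\<rho> x)) (reach f U X k) = \<phi> ((\<Gamma> ^^ k) (INF z\<in>X. \<rho> z))"
proof -
  have "Psi (\<lambda>x. \<phi> (\<rho> x)) (reach f U X k) = \<phi> (INF z\<in>reach f U X k. \<rho> z)"
    unfolding Psi_def using \<rho>_nonneg
    by (intro INF_mono_comp_eq compact_reach[OF f_cont U_compact U_ne X(1)]
        reach_nonempty[OF X(2) U_ne] continuous_on_subset[OF \<rho>_cont] mono_on_subset[OF \<phi>]) auto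
  then show ?thesis
    by (simp add: INF_reach_eq_funpow[OF X])
qed

lemma obtain_optimal_control:
  obtains u0 where "u0 \<in> U" "\<rho> (f x u0) = \<Gamma> (\<rho> x)"
proof -
  have "continuous_on U (\<lambda>u. (\<lambda>(x, u). f x u) (x, u))"
    by (intro continuous_on_compose2[OF f_cont] continuous_intros) auto
  then have "continuous_on U (\<lambda>u. \<rho> (f x u))"
    by (intro continuous_on_compose2[OF \<rho>_cont]) auto
  then obtain u0 where u0: "u0 \<in> U" "\<And>u. u \<in> U \<Longrightarrow> \<rho> (f x u0) \<le> \<rho> (f x u)"
    using continuous_attains_inf[OF U_compact U_ne] by blast
  then have "\<rho> (f x u0) = (INF u\<in>U. \<rho> (f x u))"
    by (intro cInf_eq_minimum[symmetric]) auto
  then show ?thesis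
    using that u0(1) by (simp only: \<Gamma>_eq)
qed

lemma Psi_reach_optimal_shift:
  assumes "mono_on {0..} \<phi>" "\<rho> (f x u0) = \<Gamma> (\<rho> x)"
  shows "Psi (\<lambda>x. \<phi> (\<rho> x)) (reach f U {f x u0} k) = Psi (\<lambda>x. \<phi> (\<rho> x)) (reach f U {x} (Suc k))"
  using assms by (simp add: Psi_reach_eq_funpow funpow_swap1)

end

lemma summable_powr_mono_exponent:
  fixes a :: "nat \<Rightarrow> real"
  assumes a_sum: "summable (\<lambda>k. a k powr p)" and "0 < p" "p \<le> q" and nonneg: "\<And>k. a k \<ge> 0"
  shows "summable (\<lambda>k. a k powr q)"
proof (rule summable_comparison_test_ev[OF _ a_sum])
  have "eventually (\<lambda>k. a k powr p < 1) sequentially"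
    using order_tendstoD(2)[OF summable_LIMSEQ_zero[OF a_sum]] by simp
  then show "eventually (\<lambda>k. norm (a k powr q) \<le> a k powr p) sequentially"
  proof eventually_elim
    case (elim k)
    then have "a k \<le> 1"
      using \<open>0 < p\<close> nonneg[of k] ge_one_powr_ge_zero[of "a k" p] by fastforce
    then show ?case
      using powr_mono'[OF \<open>p \<le> q\<close> nonneg[of k]] by simp
  qed
qed

text \<open>Steering into the r-neighbourhood of A and switching there to the stabilizing control
  makes the distance to A eventually dominated by M \<lambda>(r, k), whose p-th powers are summable.\<close>
lemma domA_summable_control:
  assumes N: "is_norm N" and A: "A \<noteq> {}" and "r > 0" "M \<ge> 0" "0 < p" "p \<le> q"
    and lam_nonneg: "\<And>s k. s \<in> {0..r} \<Longrightarrow> lam s k \<ge> 0"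
    and lam_mono: "\<And>k. mono_on {0..r} (\<lambda>s. lam s k)"
    and lam_sum: "summable (\<lambda>k. lam r k powr p)"
    and stab: "\<And>x. setdist N x A \<le> r \<Longrightarrow>
        \<exists>\<pi>. (\<forall>j. \<pi> j \<in> U) \<and> (\<forall>k. setdist N (traj f x \<pi> k) A \<le> M * lam (setdist N x A) k)"
    and x: "x \<in> domA N f U A"
  obtains \<pi> where "\<forall>j. \<pi> j \<in> U" "summable (\<lambda>k. setdist N (traj f x \<pi> k) A powr q)"
proof -
  obtain \<pi> where \<pi>: "\<forall>j. \<pi> j \<in> U" "(\<lambda>k. setdist N (traj f x \<pi> k) A) \<longlonglongrightarrow> 0"
    using x unfolding domA_def by blast
  obtain K where K: "setdist N (traj f x \<pi> K) A < r"
    using order_tendstoD(2)[OF \<pi>(2) \<open>r > 0\<close>] by (auto simp: eventually_sequentially)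
  define z where "z = traj f x \<pi> K"
  have d: "setdist N z A \<in> {0..r}"
    using K setdist_nonneg[OF N A] unfolding z_def by (simp add: less_imp_le)
  obtain \<pi>' where \<pi>': "\<forall>j. \<pi>' j \<in> U" "\<And>k. setdist N (traj f z \<pi>' k) A \<le> M * lam (setdist N z A) k"
    using stab[of z] d by auto
  define \<sigma> where "\<sigma> = (\<lambda>j. if j < K then \<pi> j else \<pi>' (j - K))"
  have bound: "setdist N (traj f x \<sigma> (k + K)) A powr q \<le> (M * lam r k) powr q" for k
  proof -
    have "lam (setdist N z A) k \<le> lam r k"
      using d \<open>r > 0\<close> by (intro mono_onD[OF lam_mono]) auto
    then have "setdist N (traj f z \<pi>' k) A \<le> M * lam r k"
      using \<pi>'(2)[of k] \<open>M \<ge> 0\<close> by (meson mult_left_mono order_trans)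
    moreover have "traj f x \<sigma> (k + K) = traj f z \<pi>' k"
      unfolding \<sigma>_def z_def by (subst add.commute) (rule traj_append)
    ultimately show ?thesis
      using setdist_nonneg[OF N A] \<open>0 < p\<close> \<open>p \<le> q\<close> by (auto intro: powr_mono2)
  qed
  have "summable (\<lambda>k. M powr p * lam r k powr p)"
    by (rule summable_mult[OF lam_sum])
  then have "summable (\<lambda>k. (M * lam r k) powr p)"
    using lam_nonneg[of r] \<open>r > 0\<close> \<open>M \<ge> 0\<close> by (simp add: powr_mult)
  then have "summable (\<lambda>k. (M * lam r k) powr q)"
    by (rule summable_powr_mono_exponent)
      (use lam_nonneg[of r] \<open>r > 0\<close> \<open>M \<ge> 0\<close> \<open>0 < p\<close> \<open>p \<le> q\<close> in auto)
  then have "summable (\<lambda>k. setdist N (traj f x \<sigma> (k + K)) A powr q)"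
    by (rule summable_comparison_test'[where N = 0]) (simp add: bound)
  moreover have "\<forall>j. \<sigma> j \<in> U"
    using \<pi>(1) \<pi>'(1) unfolding \<sigma>_def by simp
  ultimately show ?thesis
    using summable_iff_shift[of "\<lambda>k. setdist N (traj f x \<sigma> k) A powr q" K] that by simp
qed

lemma Psi_nonneg: "(\<And>x. \<alpha> x \<ge> 0) \<Longrightarrow> X \<noteq> {} \<Longrightarrow> Psi \<alpha> X \<ge> 0"
  unfolding Psi_def by (rule cINF_greatest) auto

lemma Psi_le: "(\<And>x. \<alpha> x \<ge> 0) \<Longrightarrow> y \<in> X \<Longrightarrow> Psi \<alpha> X \<le> \<alpha> y"
  unfolding Psi_def by (rule cINF_lower) (auto intro: bdd_belowI[where m = 0])

lemma summable_Psi_reach: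
  assumes "\<forall>j. \<pi> j \<in> U" "x \<in> X" and \<alpha>_nonneg: "\<And>x. \<alpha> x \<ge> 0"
    and "summable (\<lambda>k. \<alpha> (traj f x \<pi> k))"
  shows "summable (\<lambda>k. Psi \<alpha> (reach f U X k))"
proof (rule summable_comparison_test'[where N = 0])
  fix k
  have "traj f x \<pi> k \<in> reach f U X k"
    using assms(1,2) unfolding reach_def by blast
  then have "0 \<le> Psi \<alpha> (reach f U X k)" "Psi \<alpha> (reach f U X k) \<le> \<alpha> (traj f x \<pi> k)"
    using Psi_nonneg[of \<alpha> "reach f U X k"] Psi_le[of \<alpha>] \<alpha>_nonneg by blast+
  then show "norm (Psi \<alpha> (reach f U X k)) \<le> \<alpha> (traj f x \<pi> k)"
    by simp
qed fact

lemma suminf_ennreal_Suc_less: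
  fixes a :: "nat \<Rightarrow> real"
  assumes a_sum: "summable a" and nonneg: "\<And>k. a k \<ge> 0" and "a 0 > 0"
  shows "(\<Sum>k. ennreal (a (Suc k))) < (\<Sum>k. ennreal (a k))"
proof -
  have a_Suc_sum: "summable (\<lambda>k. a (Suc k))"
    using a_sum by (subst summable_Suc_iff)
  have "(\<Sum>k. ennreal (a (Suc k))) = ennreal (\<Sum>k. a (Suc k))"
    by (rule suminf_ennreal2[OF nonneg a_Suc_sum])
  also have "\<dots> < ennreal (suminf a)"
    using \<open>a 0 > 0\<close> suminf_nonneg[OF a_Suc_sum nonneg] suminf_split_head[OF a_sum]
    by (intro ennreal_lessI) auto
  also have "\<dots> = (\<Sum>k. ennreal (a k))"
    by (rule suminf_ennreal2[OF nonneg a_sum, symmetric])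
  finally show ?thesis .
qed

lemma Wfun_nonneg: "Wfun \<alpha> f U X \<ge> 0"
  unfolding Wfun_def by simp

lemma Wfun_strict_mono:
  assumes "Vfun \<alpha> f U X < Vfun \<alpha> f U Y"
  shows "Wfun \<alpha> f U X < Wfun \<alpha> f U Y"
proof (cases "Vfun \<alpha> f U Y = \<infinity>")
  case True
  then show ?thesis
    using assms unfolding Wfun_def by simp
next
  case False
  then have "enn2real (Vfun \<alpha> f U X) < enn2real (Vfun \<alpha> f U Y)"
    using assms by (simp add: less_top)
  then show ?thesis
    using assms False unfolding Wfun_def by auto
qed

lemma INF_Vfun_Wfun_less:
  assumes "u0 \<in> U" and V_less: "Vfun \<alpha> f U {f x u0} < Vfun \<alpha> f U {x}"
  shows "(INF u\<in>U. Vfun \<alpha> f U {f x u}) < Vfun \<alpha> f U {x}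
    \<and> (INF u\<in>U. Wfun \<alpha> f U {f x u}) < Wfun \<alpha> f U {x}"
proof
  show "(INF u\<in>U. Vfun \<alpha> f U {f x u}) < Vfun \<alpha> f U {x}"
    using INF_lower[OF \<open>u0 \<in> U\<close>] V_less by (rule order.strict_trans1)
  have "(INF u\<in>U. Wfun \<alpha> f U {f x u}) \<le> Wfun \<alpha> f U {f x u0}"
    by (rule cINF_lower[OF bdd_belowI2[where m = 0] \<open>u0 \<in> U\<close>]) (rule Wfun_nonneg)
  also have "\<dots> < Wfun \<alpha> f U {x}"
    by (rule Wfun_strict_mono[OF V_less])
  finally show "(INF u\<in>U. Wfun \<alpha> f U {f x u}) < Wfun \<alpha> f U {x}" .
qed

theorem theorem15:
  fixes N :: "real^'n \<Rightarrow> real"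
    and f :: "real^'n \<Rightarrow> real^'m \<Rightarrow> real^'n"
    and U :: "(real^'m) set"
    and A :: "(real^'n) set"
    and r M p :: real
    and lam :: "real \<Rightarrow> nat \<Rightarrow> real"
    and \<alpha> :: "real^'n \<Rightarrow> real"
    and \<alpha>lo \<alpha>hi pbar :: real
    and \<rho> :: "real^'n \<Rightarrow> real"
    and \<phi> :: "real \<Rightarrow> real"
    and \<Gamma> :: "real \<Rightarrow> real"
  assumes norm: "is_norm N"
    and f_cont: "continuous_on UNIV (\<lambda>(x, u). f x u)"
    and U_compact: "compact U" and U_ne: "U \<noteq> {}"
    and A_compact: "compact A" and A_ne: "A \<noteq> {}"
    and A_inv: "controlled_invariant f U A"
    and r_pos: "r > 0" and M_ge: "M \<ge> 1" and p_pos: "p > 0"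
    and lam_nonneg: "\<And>s k. s \<in> {0..r} \<Longrightarrow> lam s k \<ge> 0"
    and lam_cont: "\<And>k. continuous_on {0..r} (\<lambda>s. lam s k)"
    and lam_mono: "\<And>k. mono_on {0..r} (\<lambda>s. lam s k)"
    and lam_zero: "\<And>k. lam 0 k = 0"
    and lam_anti: "\<And>s k k'. s \<in> {0..r} \<Longrightarrow> k \<le> k' \<Longrightarrow> lam s k' \<le> lam s k"
    and lam_init: "\<And>s. s \<in> {0..r} \<Longrightarrow> lam s 0 \<le> s"
    and lam_sum: "summable (\<lambda>k. lam r k powr p)"
    and stab: "\<And>x. setdist N x A \<le> r \<Longrightarrow>
        \<exists>\<pi>. (\<forall>j. \<pi> j \<in> U) \<and> (\<forall>k. setdist N (traj f x \<pi> k) A \<le> M * lam (setdist N x A) k)"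
    and \<alpha>_cont: "continuous_on UNIV \<alpha>"
    and \<alpha>_nonneg: "\<And>x. \<alpha> x \<ge> 0"
    and \<alpha>lo_pos: "\<alpha>lo > 0" and \<alpha>hi_pos: "\<alpha>hi > 0" and pbar_ge: "pbar \<ge> p"
    and \<alpha>_lower: "\<And>x. \<alpha>lo * setdist N x A powr pbar \<le> \<alpha> x"
    and \<alpha>_upper: "\<And>x. \<alpha> x \<le> \<alpha>hi * setdist N x A powr pbar"
    and \<rho>_cont: "continuous_on UNIV \<rho>"
    and \<rho>_nonneg: "\<And>x. \<rho> x \<ge> 0"
    and \<phi>_cont: "continuous_on {0..} \<phi>"
    and \<phi>_mono: "mono_on {0..} \<phi>"
    and \<phi>_nonneg: "\<And>t. t \<ge> 0 \<Longrightarrow> \<phi> t \<ge> 0"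
    and \<alpha>_eq: "\<And>x. \<alpha> x = \<phi> (\<rho> x)"
    and \<Gamma>_mono: "mono_on {0..} \<Gamma>"
    and \<Gamma>_nonneg: "\<And>t. t \<ge> 0 \<Longrightarrow> \<Gamma> t \<ge> 0"
    and \<Gamma>_eq: "\<And>x. (INF u\<in>U. \<rho> (f x u)) = \<Gamma> (\<rho> x)"
  shows "\<forall>x \<in> domA N f U A - A.
           (INF u\<in>U. Vfun \<alpha> f U {f x u}) < Vfun \<alpha> f U {x}
         \<and> (INF u\<in>U. Wfun \<alpha> f U {f x u}) < Wfun \<alpha> f U {x}"
proof
  fix x assume x: "x \<in> domA N f U A - A"
  interpret scalar_reduction f U \<rho> \<Gamma>
    using f_cont U_compact U_ne \<rho>_cont \<rho>_nonneg \<Gamma>_mono \<Gamma>_eq by unfold_locales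
  have \<alpha>_comp: "\<alpha> = (\<lambda>x. \<phi> (\<rho> x))"
    using \<alpha>_eq by (rule ext)
  obtain u0 where u0: "u0 \<in> U" "\<rho> (f x u0) = \<Gamma> (\<rho> x)"
    by (rule obtain_optimal_control)
  define a where "a k = Psi \<alpha> (reach f U {x} k)" for k
  have a_nonneg: "a k \<ge> 0" for k
    unfolding a_def using \<alpha>_nonneg reach_nonempty[OF _ U_ne, of "{x}"] by (intro Psi_nonneg) auto
  have "a 0 = \<alpha> x"
    unfolding a_def Psi_def by (simp add: reach_0[OF U_ne])
  moreover have "\<alpha>lo * setdist N x A powr pbar > 0"
    using setdist_pos[OF norm A_compact A_ne, of x] x \<alpha>lo_pos by simp
  ultimately have a0_pos: "a 0 > 0"
    using \<alpha>_lower[of x] by linarith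
  obtain \<pi> where \<pi>: "\<forall>j. \<pi> j \<in> U" "summable (\<lambda>k. setdist N (traj f x \<pi> k) A powr pbar)"
    using domA_summable_control[OF norm A_ne r_pos _ p_pos pbar_ge lam_nonneg lam_mono lam_sum stab]
      x M_ge by auto
  have "summable (\<lambda>k. \<alpha> (traj f x \<pi> k))"
    by (rule summable_comparison_test'[where N = 0, OF summable_mult[OF \<pi>(2), of \<alpha>hi]])
      (simp add: \<alpha>_nonneg \<alpha>_upper)
  then have "summable a"
    unfolding a_def using \<pi>(1) \<alpha>_nonneg by (intro summable_Psi_reach) auto
  moreover have "Vfun \<alpha> f U {f x u0} = (\<Sum>k. ennreal (a (Suc k)))"
    unfolding Vfun_def a_def \<alpha>_comp Psi_reach_optimal_shift[OF \<phi>_mono u0(2)] ..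
  ultimately have "Vfun \<alpha> f U {f x u0} < Vfun \<alpha> f U {x}"
    using a_nonneg a0_pos by (simp add: Vfun_def a_def[symmetric] suminf_ennreal_Suc_less)
  then show "(INF u\<in>U. Vfun \<alpha> f U {f x u}) < Vfun \<alpha> f U {x}
      \<and> (INF u\<in>U. Wfun \<alpha> f U {f x u}) < Wfun \<alpha> f U {x}"
    by (rule INF_Vfun_Wfun_less[OF u0(1)])
qed

end
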